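(* Assume the event $\mathcal{E}$ holds. Then the radius used by ILESS satisfies $$\sigma_{\mathrm{ILESS}} \le 6\frac{A}{m} + 3\sqrt{\frac{A}{m}\, R(f^* )} = O\!\left(\frac{A}{m} + \sqrt{\frac{A}{m}\, R(f^* )}\right),$$ where $f^*$ is any true risk minimizer in $\mathcal{F}$.
   Context: Let $\mathcal{F}$ be a hypothesis class of binary classifiers $\mathcal{X}\to\{\pm1\}$ with finite VC dimension $d$. Let $\mathcal{P}_{X,Y}$ be an unknown distribution on $\mathcal{X}\times\{\pm1\}$, and let $S_m$ be an i.i.d. sample of size $m$ from it. With the 0/1 loss, $R(f)=\Pr(f(X)\neq Y)$ is the true risk and $\hat R(f)=\hat R(f,S_m)$ is the empirical risk on $S_m$. $\hat f$ is an empirical risk minimizer over $\mathcal{F}$, and $f^*$ is a true risk minimizer over $\mathcal{F}$ (assumed to exist). Fix a confidence parameter $0<\delta<1$ and set $A \triangleq 4d\ln\!\big(\tfrac{16me}{d\delta}\big)$. The event $\mathcal{E}$ is the event that, simultaneously for every $f\in\mathcal{F}$, both of the following hold: $$R(f)\le \hat R(f)+\min\Big\{\tfrac{A}{m}+\sqrt{\tfrac{A}{m}\hat R(f)},\ \sqrt{\tfrac{A}{m}R(f)}\Big\},$$ $$\hat R(f)\le R(f)+\min\Big\{\tfrac{A}{m}+\sqrt{\tfrac{A}{m}R(f)},\ \sqrt{\tfrac{A}{m}\hat R(f)}\Big\}.$$ This event has probability at least $1-\delta$ (a uniform convergence bound of Dasgupta et al., based on Bousquet et al., combined with Sauer's lemma).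 The radius used by ILESS is $$\sigma_{\mathrm{ILESS}}=\frac{A}{m}+\sqrt{\frac{A}{m}\hat R(\hat f)}+\frac{A}{m}+\sqrt{\frac{A}{m}\Big[\hat R(\hat f)+\frac{A}{m}+\sqrt{\frac{A}{m}\hat R(\hat f)}\Big]}.$$ *)

theory Defs
  imports "HOL-Probability.Probability"
begin

text \<open>Binary classifiers X -> {+1,-1} are modelled as functions into int whose
values lie in {-1,1}; labelled examples are pairs (x,y) with y in {-1,1}.\<close>

definition shatters :: "('x \<Rightarrow> int) set \<Rightarrow> 'x set \<Rightarrow> bool" where
  "shatters F C \<longleftrightarrow> (\<forall>D\<subseteq>C. \<exists>f\<in>F. \<forall>x\<in>C. (f x = 1 \<longleftrightarrow> x \<in> D))"

definition VC_dim_is :: "('x \<Rightarrow> int) set \<Rightarrow> nat \<Rightarrow> bool" where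
  "VC_dim_is F d \<longleftrightarrow>
     (\<exists>C. finite C \<and> card C = d \<and> shatters F C) \<and>
     (\<forall>C. finite C \<and> shatters F C \<longrightarrow> card C \<le> d)"

definition true_risk :: "('x \<times> int) measure \<Rightarrow> ('x \<Rightarrow> int) \<Rightarrow> real" where
  "true_risk P f = measure P {z \<in> space P. f (fst z) \<noteq> snd z}"

definition emp_risk :: "('x \<times> int) list \<Rightarrow> ('x \<Rightarrow> int) \<Rightarrow> real" where
  "emp_risk S f = real (card {i. i < length S \<and> f (fst (S ! i)) \<noteq> snd (S ! i)}) / real (length S)"

definition A_const :: "nat \<Rightarrow> nat \<Rightarrow> real \<Rightarrow> real" where
  "A_const d m \<delta> = 4 * real d * ln (16 * real m * exp 1 / (real d * \<delta>))"

definition event_E ::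
  "('x \<Rightarrow> int) set \<Rightarrow> ('x \<times> int) measure \<Rightarrow> ('x \<times> int) list \<Rightarrow> real \<Rightarrow> bool" where
  "event_E F P S A \<longleftrightarrow> (\<forall>f\<in>F.
     let m = real (length S); R = true_risk P f; Rh = emp_risk S f in
     R \<le> Rh + min (A / m + sqrt (A / m * Rh)) (sqrt (A / m * R)) \<and>
     Rh \<le> R + min (A / m + sqrt (A / m * R)) (sqrt (A / m * Rh)))"

definition sigma_ILESS :: "real \<Rightarrow> nat \<Rightarrow> real \<Rightarrow> real" where
  "sigma_ILESS A m Rh =
     A / real m + sqrt (A / real m * Rh) + A / real m
     + sqrt (A / real m * (Rh + A / real m + sqrt (A / real m * Rh)))"

end

theory Submission
  imports Defs
begin

text \<open>Write \<open>a = A/m\<close>. On the event E, the empirical risk of \<open>f\<^sup>*\<close> is at most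
  \<open>R(f\<^sup>*) + a + \<surd>(a R(f\<^sup>*))\<close>, and the ERM's empirical risk is no larger. Plugging this
  bound into the radius, each square root is dominated by the square root of a perfect square,
  \<open>a R + a\<^sup>2 + a \<surd>(a R) \<le> (a + \<surd>(a R))\<^sup>2\<close> and similarly for the nested term, which gives
  \<open>\<sigma> \<le> 5a + 2\<surd>(a R(f\<^sup>*))\<close>.\<close>

lemma true_risk_nonneg: "0 \<le> true_risk P f"
  by (simp add: true_risk_def)

lemma emp_risk_nonneg: "0 \<le> emp_risk S f"
  by (simp add: emp_risk_def)

lemma event_E_risk_bounds:
  assumes "event_E F P S A" "f \<in> F"
  defines "a \<equiv> A / real (length S)"
  shows "true_risk P f \<le> emp_risk S f + min (a + sqrt (a * emp_risk S f)) (sqrt (a * true_risk P f))"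
    and "emp_risk S f \<le> true_risk P f + min (a + sqrt (a * true_risk P f)) (sqrt (a * emp_risk S f))"
  using assms unfolding event_E_def a_def Let_def by auto

text \<open>The event E cannot hold for a negative rate: both square roots would be non-positive,
  so the two bounds would force \<open>R \<le> R\<^sub>e\<^sub>m\<^sub>p < R\<close>.\<close>

lemma event_E_rate_nonneg:
  assumes "event_E F P S A" "f \<in> F"
  shows "0 \<le> A / real (length S)"
proof (rule ccontr)
  let ?a = "A / real (length S)"
  assume "\<not> 0 \<le> ?a"
  then have a_nonpos: "?a \<le> 0"
    by simp
  have "?a * emp_risk S f \<le> 0" "?a * true_risk P f \<le> 0"
    using mult_nonpos_nonneg[OF a_nonpos emp_risk_nonneg] mult_nonpos_nonneg[OF a_nonpos true_risk_nonneg] .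
  then have "sqrt (?a * emp_risk S f) \<le> 0" "sqrt (?a * true_risk P f) \<le> 0"
    by simp_all
  with event_E_risk_bounds[OF assms] \<open>\<not> 0 \<le> ?a\<close> show False
    by linarith
qed

lemma event_E_emp_risk_le:
  assumes "event_E F P S A" "f \<in> F"
  defines "a \<equiv> A / real (length S)"
  shows "emp_risk S f \<le> true_risk P f + a + sqrt (a * true_risk P f)"
  using event_E_risk_bounds(2)[OF assms(1,2)] unfolding a_def by linarith

lemma sqrt_mult_le_of_le_add_sqrt:
  fixes a R x :: real
  assumes "0 \<le> a" "0 \<le> R" "x \<le> R + a + sqrt (a * R)"
  shows "sqrt (a * x) \<le> a + sqrt (a * R)"
proof (rule real_le_lsqrt)
  let ?r = "sqrt (a * R)"
  have r: "0 \<le> ?r" "?r\<^sup>2 = a * R"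
    using assms by simp_all
  then show "0 \<le> a + ?r"
    using assms(1) by simp
  have "a * x \<le> a * (R + a + ?r)"
    using assms by (simp add: mult_left_mono)
  also have "\<dots> \<le> (a + ?r)\<^sup>2"
    using r assms(1) by (simp add: power2_eq_square algebra_simps)
  finally show "a * x \<le> (a + ?r)\<^sup>2" .
qed

lemma sigma_ILESS_le:
  fixes A R Rh :: real and m :: nat
  defines "a \<equiv> A / real m"
  assumes a: "0 \<le> a" and R: "0 \<le> R" and Rh: "Rh \<le> R + a + sqrt (a * R)"
  shows "sigma_ILESS A m Rh \<le> 5 * a + 2 * sqrt (a * R)"
proof -
  let ?r = "sqrt (a * R)"
  have r: "0 \<le> ?r" "?r\<^sup>2 = a * R"
    using a R by simp_all
  have first: "sqrt (a * Rh) \<le> a + ?r"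
    using sqrt_mult_le_of_le_add_sqrt[OF a R Rh] .
  have second: "sqrt (a * (Rh + a + sqrt (a * Rh))) \<le> ?r + 2 * a"
  proof (rule real_le_lsqrt)
    show "0 \<le> ?r + 2 * a"
      using a r by simp
    have "a * (Rh + a + sqrt (a * Rh)) \<le> a * ((R + a + ?r) + a + (a + ?r))"
      using Rh first a by (intro mult_left_mono) auto
    also have "\<dots> \<le> (?r + 2 * a)\<^sup>2"
      using r a by (simp add: power2_eq_square algebra_simps)
    finally show "a * (Rh + a + sqrt (a * Rh)) \<le> (?r + 2 * a)\<^sup>2" .
  qed
  have "sigma_ILESS A m Rh = 2 * a + sqrt (a * Rh) + sqrt (a * (Rh + a + sqrt (a * Rh)))"
    unfolding sigma_ILESS_def a_def by simp
  with first second show ?thesis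
    by linarith
qed

theorem lemma4:
  fixes F :: "('x \<Rightarrow> int) set" and P :: "('x \<times> int) measure"
    and S :: "('x \<times> int) list" and d m :: nat and \<delta> :: real
    and f_hat f_star :: "'x \<Rightarrow> int"
  assumes F_binary: "\<forall>f\<in>F. \<forall>x. f x \<in> {-1, 1}"
    and VC: "VC_dim_is F d"
    and P_prob: "prob_space P"
    and P_labels: "snd ` space P \<subseteq> {-1, 1}"
    and S_len: "length S = m" and m_pos: "m > 0"
    and S_in: "set S \<subseteq> space P"
    and \<delta>_range: "0 < \<delta>" "\<delta> < 1"
    and ERM: "f_hat \<in> F" "\<forall>f\<in>F. emp_risk S f_hat \<le> emp_risk S f"
    and TRM: "f_star \<in> F" "\<forall>f\<in>F. true_risk P f_star \<le> true_risk P f"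
    and E: "event_E F P S (A_const d m \<delta>)"
  shows "sigma_ILESS (A_const d m \<delta>) m (emp_risk S f_hat)
           \<le> 6 * (A_const d m \<delta> / real m)
             + 3 * sqrt (A_const d m \<delta> / real m * true_risk P f_star)"
proof -
  let ?a = "A_const d m \<delta> / real m" and ?R = "true_risk P f_star"
  have a: "0 \<le> ?a"
    using event_E_rate_nonneg[OF E TRM(1)] S_len by simp
  have "emp_risk S f_hat \<le> emp_risk S f_star"
    using ERM TRM(1) by blast
  also have "\<dots> \<le> ?R + ?a + sqrt (?a * ?R)"
    using event_E_emp_risk_le[OF E TRM(1)] S_len by simp
  finally have "sigma_ILESS (A_const d m \<delta>) m (emp_risk S f_hat) \<le> 5 * ?a + 2 * sqrt (?a * ?R)"
    using sigma_ILESS_le a true_risk_nonneg by blast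
  moreover have "0 \<le> sqrt (?a * ?R)"
    using a true_risk_nonneg by (intro real_sqrt_ge_zero mult_nonneg_nonneg)
  ultimately show ?thesis
    using a by linarith
qed

end
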